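(* Let $\mathbb{K}\in\{\mathbb{C},\mathbb{R}\}$, let $f=(f_1,f_2):\mathbb{K}^2\to\mathbb{K}^2$ be a dominant polynomial map whose components have non-zero constant terms, and let $\Gamma$ be an edge of $A=\mathsf{NP}(f_1)\oplus\mathsf{NP}(f_2)$. Then the set $\mathtt{TF}_{\mathbb{K}}(\Gamma)$ does not depend on the choice of $U\in\mathcal{T}_\Gamma$ used in its definition: for any $U,U'\in\mathcal{T}_\Gamma$, the sets $\mathtt{TF}_{\mathbb{K}}(\Gamma)$ defined using $\overline{U}$ and using $\overline{U'}$ coincide.
   Context: Standing setting. $\mathbb{K}^*=\mathbb{K}\setminus\{0\}$. $f=(f_1,f_2)$ with $f_i\in\mathbb{K}[x_1,x_2]$ is dominant and $f_1,f_2$ have non-zero constant terms. The Newton polytope $\mathsf{NP}(P)$ of $P=\sum c_a x^a$ is the convex hull of $\{a: c_a\neq0\}$. $A_i=\mathsf{NP}(f_i)$, $A=A_1\oplus A_2$. The face of a polygon $P$ supported by nonzero $\alpha\in\mathbb{R}^2$ is the set of minimizers of $\langle\alpha,\cdot\rangle$ on $P$. An edge $\Gamma$ of $A$ is a 1-dimensional face; with $\alpha$ supporting it, $\Gamma=\Gamma_1\oplus\Gamma_2$ where $\Gamma_i$ is the face of $A_i$ supported by $\alpha$. $\Gamma$-toric transformations. Let $a_1$ be a vertex of $\Gamma$ of minimal Euclidean norm, $v$ the primitive integer vector from $a_1$ along $\Gamma$, and $w\in\mathbb{Z}^2$ such that $(v,w)$ is a basis of $\mathbb{Z}^2$ and $A-a_1\subset\{b_1v+b_2w:b_1,b_2\ge0\}$.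 With $T$ the matrix with rows $v,w$, put $U=(T^{-1})^\top$; $\mathcal{T}_\Gamma$ is the set of all such $U$. $U$ maps $\sum c_ax^a$ to $\sum c_a z^{Ua}$. With $\gamma_i$ the vertices of $\Gamma_i$ such that $\gamma_1+\gamma_2=a_1$, set $\overline{U}(f-y):=\big(U(x^{-\gamma_1}(f_1-y_1)),U(x^{-\gamma_2}(f_2-y_2))\big)\in\mathbb{K}[z_1,z_2]^2$. $\mathtt{T}$-multiplicity sets. $\mathrm{Sol}_{\mathbb{K}}(\Gamma)$ is the set of $\rho\in\mathbb{K}^*$ such that $(\rho,0)$ is a common zero of $\overline{U}(f-\tilde y)$ for some $\tilde y\in\mathbb{K}^2$. For $\rho\in\mathrm{Sol}_{\mathbb{K}}(\Gamma)$, $\mathtt{TF}^{\rho}_{\mathbb{K}}(\Gamma)$ is the Euclidean closure of the set of $y\in\mathbb{K}^2$ such that $\overline{U}(f-y)(\rho,0)=0$ and there exist sequences $\varrho_k\in(\mathbb{K}^* )^2$, $y_k\in\mathbb{K}^2$ with $\varrho_k\to(\rho,0)$, $y_k\to y$ and $\overline{U}(f-y_k)(\varrho_k)=0$. Finally $\mathtt{TF}_{\mathbb{K}}(\Gamma)=\bigcup_{\rho\in\mathrm{Sol}_{\mathbb{K}}(\Gamma)}\mathtt{TF}^{\rho}_{\mathbb{K}}(\Gamma)$. *)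

theory Defs
  imports "HOL-Analysis.Analysis"
begin

text \<open>Laurent polynomials in two variables over a field, represented by their
  coefficient function on exponent vectors in Z^2 (finite support is imposed where needed).
  The coefficient of x^a is P a.\<close>
type_synonym 'a lpoly = "int \<times> int \<Rightarrow> 'a"

definition supp :: "'a::zero lpoly \<Rightarrow> (int \<times> int) set" where
  "supp P = {a. P a \<noteq> 0}"

definition is_poly2 :: "'a::zero lpoly \<Rightarrow> bool" where
  "is_poly2 P \<longleftrightarrow> finite (supp P) \<and> (\<forall>a\<in>supp P. fst a \<ge> 0 \<and> snd a \<ge> 0)"

definition leval :: "'a::field lpoly \<Rightarrow> 'a \<times> 'a \<Rightarrow> 'a" where
  "leval P z = (\<Sum>a\<in>supp P. P a * (fst z powi fst a) * (snd z powi snd a))"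

text \<open>Dominance: the image of (f1,f2) : K^2 -> K^2 is Zariski dense, i.e. no nonzero
  polynomial vanishes on it.\<close>
definition dominant2 :: "'a::field lpoly \<Rightarrow> 'a lpoly \<Rightarrow> bool" where
  "dominant2 f1 f2 \<longleftrightarrow>
     (\<forall>g. is_poly2 g \<and> (\<forall>x. leval g (leval f1 x, leval f2 x) = 0) \<longrightarrow> (\<forall>a. g a = 0))"

definition rvec :: "int \<times> int \<Rightarrow> real \<times> real" where
  "rvec a = (of_int (fst a), of_int (snd a))"

definition NP :: "'a::zero lpoly \<Rightarrow> (real \<times> real) set" where
  "NP P = convex hull (rvec ` supp P)"

definition msum :: "(real \<times> real) set \<Rightarrow> (real \<times> real) set \<Rightarrow> (real \<times> real) set" where
  "msum A B = {a + b | a b. a \<in> A \<and> b \<in> B}"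

definition face :: "(real \<times> real) set \<Rightarrow> real \<times> real \<Rightarrow> (real \<times> real) set" where
  "face P \<alpha> = {x \<in> P. \<forall>y\<in>P. \<alpha> \<bullet> x \<le> \<alpha> \<bullet> y}"

definition is_edge :: "(real \<times> real) set \<Rightarrow> (real \<times> real) set \<Rightarrow> bool" where
  "is_edge P \<Gamma> \<longleftrightarrow> (\<exists>\<alpha>. \<alpha> \<noteq> 0 \<and> \<Gamma> = face P \<alpha>) \<and> aff_dim \<Gamma> = 1"

definition min_norm_vertex :: "(real \<times> real) set \<Rightarrow> int \<times> int \<Rightarrow> bool" where
  "min_norm_vertex \<Gamma> a1 \<longleftrightarrow> rvec a1 extreme_point_of \<Gamma> \<and>
     (\<forall>b. b extreme_point_of \<Gamma> \<longrightarrow> norm (rvec a1) \<le> norm b)"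

definition det2 :: "int \<times> int \<Rightarrow> int \<times> int \<Rightarrow> int" where
  "det2 v w = fst v * snd w - snd v * fst w"

definition toric_basis ::
  "(real \<times> real) set \<Rightarrow> (real \<times> real) set \<Rightarrow> int \<times> int \<Rightarrow> int \<times> int \<Rightarrow> int \<times> int \<Rightarrow> bool" where
  "toric_basis A \<Gamma> a1 v w \<longleftrightarrow>
     gcd (fst v) (snd v) = 1 \<and>
     (\<exists>t>0. rvec a1 + t *\<^sub>R rvec v \<in> \<Gamma>) \<and>
     (det2 v w = 1 \<or> det2 v w = -1) \<and>
     (\<forall>x\<in>A. \<exists>b1 b2. b1 \<ge> 0 \<and> b2 \<ge> 0 \<and> x - rvec a1 = b1 *\<^sub>R rvec v + b2 *\<^sub>R rvec w)"

text \<open>U = (T^{-1})^T where T is the integer matrix with rows v, w (det T = d = +-1,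
  so T^{-1} = d * adj T). U acts on exponent vectors.\<close>
definition Umat :: "int \<times> int \<Rightarrow> int \<times> int \<Rightarrow> int \<times> int \<Rightarrow> int \<times> int" where
  "Umat v w a = (let d = det2 v w in
      (d * (snd w * fst a - fst w * snd a), d * (fst v * snd a - snd v * fst a)))"

definition T_Gamma ::
  "(real \<times> real) set \<Rightarrow> (real \<times> real) set \<Rightarrow> int \<times> int \<Rightarrow> (int \<times> int \<Rightarrow> int \<times> int) set" where
  "T_Gamma A \<Gamma> a1 = {U. \<exists>v w. toric_basis A \<Gamma> a1 v w \<and> U = Umat v w}"

definition ptrans :: "(int \<times> int \<Rightarrow> int \<times> int) \<Rightarrow> 'a::comm_monoid_add lpoly \<Rightarrow> 'a lpoly" where
  "ptrans U P = (\<lambda>b. \<Sum>a\<in>{a \<in> supp P. U a = b}. P a)"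

text \<open>Multiplication by x^(-g).\<close>
definition xshift :: "int \<times> int \<Rightarrow> 'a lpoly \<Rightarrow> 'a lpoly" where
  "xshift g P = (\<lambda>a. P (a + g))"

definition minus_const :: "'a::ab_group_add lpoly \<Rightarrow> 'a \<Rightarrow> 'a lpoly" where
  "minus_const P c = (\<lambda>a. P a - (if a = (0, 0) then c else 0))"

definition Ubar ::
  "(int \<times> int \<Rightarrow> int \<times> int) \<Rightarrow> int \<times> int \<Rightarrow> int \<times> int \<Rightarrow> 'a::field lpoly \<Rightarrow> 'a lpoly \<Rightarrow> 'a \<times> 'a
    \<Rightarrow> 'a lpoly \<times> 'a lpoly" where
  "Ubar U \<gamma>1 \<gamma>2 f1 f2 y =
     (ptrans U (xshift \<gamma>1 (minus_const f1 (fst y))), ptrans U (xshift \<gamma>2 (minus_const f2 (snd y))))"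

definition common_zero :: "'a::field lpoly \<times> 'a lpoly \<Rightarrow> 'a \<times> 'a \<Rightarrow> bool" where
  "common_zero PQ z \<longleftrightarrow> leval (fst PQ) z = 0 \<and> leval (snd PQ) z = 0"

definition Sol ::
  "(int \<times> int \<Rightarrow> int \<times> int) \<Rightarrow> int \<times> int \<Rightarrow> int \<times> int \<Rightarrow> 'a::field lpoly \<Rightarrow> 'a lpoly \<Rightarrow> 'a set" where
  "Sol U \<gamma>1 \<gamma>2 f1 f2 = {\<rho>. \<rho> \<noteq> 0 \<and> (\<exists>y. common_zero (Ubar U \<gamma>1 \<gamma>2 f1 f2 y) (\<rho>, 0))}"

definition TFrho ::
  "(int \<times> int \<Rightarrow> int \<times> int) \<Rightarrow> int \<times> int \<Rightarrow> int \<times> int \<Rightarrow> 'a::real_normed_field lpoly \<Rightarrow> 'a lpoly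
    \<Rightarrow> 'a \<Rightarrow> ('a \<times> 'a) set" where
  "TFrho U \<gamma>1 \<gamma>2 f1 f2 \<rho> = closure
     {y. common_zero (Ubar U \<gamma>1 \<gamma>2 f1 f2 y) (\<rho>, 0) \<and>
         (\<exists>r ys. (\<forall>k. fst (r k) \<noteq> 0 \<and> snd (r k) \<noteq> 0) \<and>
                 r \<longlonglongrightarrow> (\<rho>, 0) \<and> ys \<longlonglongrightarrow> y \<and>
                 (\<forall>k. common_zero (Ubar U \<gamma>1 \<gamma>2 f1 f2 (ys k)) (r k)))}"

definition TF ::
  "(int \<times> int \<Rightarrow> int \<times> int) \<Rightarrow> int \<times> int \<Rightarrow> int \<times> int \<Rightarrow> 'a::real_normed_field lpoly \<Rightarrow> 'a lpoly
    \<Rightarrow> ('a \<times> 'a) set" where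
  "TF U \<gamma>1 \<gamma>2 f1 f2 = (\<Union>\<rho>\<in>Sol U \<gamma>1 \<gamma>2 f1 f2. TFrho U \<gamma>1 \<gamma>2 f1 f2 \<rho>)"

end

theory Submission
  imports Defs
begin

(* Two admissible bases (v, w) and (v', w') share their first vector: v is the primitive
  integer direction of the edge \<Gamma> leaving its extreme point a1. Hence U' b = (U1 b + c U2 b, \<plusminus>U2 b)
  for some integer c, and as both U and U' map the supports of x^(-\<gamma>i)(fi - yi) into the
  upper half plane, the sign is irrelevant there. On the level of points this is the
  substitution (z1, z2) \<mapsto> (z1, z1^c z2), a homeomorphism of K* \<times> K preserving K* \<times> K* and
  fixing the axis z2 = 0 pointwise, so it transports the solutions \<rho>, the approximating
  sequences and hence TF. *)

lemma Umat_change_of_complement: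
  assumes "\<bar>det2 v w\<bar> = 1" "\<bar>det2 v w'\<bar> = 1"
  shows "Umat v w' a =
    (fst (Umat v w a) + det2 v w' * det2 w w' * snd (Umat v w a),
     det2 v w * det2 v w' * snd (Umat v w a))"
proof -
  obtain v1 v2 w1 w2 x1 x2 a1 a2
    where components: "v = (v1, v2)" "w = (w1, w2)" "w' = (x1, x2)" "a = (a1, a2)"
    by (cases v, cases w, cases w', cases a) auto
  define d where "d = v1 * w2 - v2 * w1"
  define d' where "d' = v1 * x2 - v2 * x1"
  define e where "e = w1 * x2 - w2 * x1"
  define p where "p = w2 * a1 - w1 * a2"
  define p' where "p' = x2 * a1 - x1 * a2"
  define q where "q = v1 * a2 - v2 * a1"
  have "\<bar>d\<bar> = 1" "\<bar>d'\<bar> = 1"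
    using assms by (simp_all add: components det2_def d_def d'_def)
  then have "d * d = 1" "d' * d' = 1"
    by (metis abs_mult_self_eq mult_1)+
  have cramer: "d * p' = d' * p + e * q"
    unfolding d_def d'_def e_def p_def p'_def q_def by (simp add: algebra_simps)
  have "d' * p' = (d' * d') * d * p + d' * e * (d * q)"
    using \<open>d * d = 1\<close> cramer
    by (metis (no_types) mult.assoc mult.commute mult.left_commute mult_1 distrib_left)
  moreover have "d' * q = d * d' * (d * q)"
    using \<open>d * d = 1\<close> by (metis mult.assoc mult.commute mult_1)
  ultimately show ?thesis
    using \<open>d' * d' = 1\<close>
    by (simp add: components Umat_def det2_def Let_def d_def d'_def e_def p_def p'_def q_def)
qed

lemma Umat_snd_nonneg:
  assumes "toric_basis A \<Gamma> a1 v w" "rvec a1 + rvec a \<in> A"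
  shows "snd (Umat v w a) \<ge> 0"
proof -
  obtain b1 b2 where "b2 \<ge> 0" and b: "rvec a = b1 *\<^sub>R rvec v + b2 *\<^sub>R rvec w"
    using assms unfolding toric_basis_def by (metis add_diff_cancel_left')
  have "of_int (fst v * snd a - snd v * fst a) = b2 * of_int (det2 v w)"
    using b by (simp add: rvec_def det2_def algebra_simps)
  then have "of_int (snd (Umat v w a)) = b2 * of_int ((det2 v w)^2)"
    by (simp add: Umat_def Let_def power2_eq_square)
  also have "(det2 v w)^2 = 1" using assms(1) by (auto simp: toric_basis_def)
  finally have "of_int (snd (Umat v w a)) = b2" by simp
  with \<open>b2 \<ge> 0\<close> show ?thesis by simp
qed

lemma Umat_shear_on_cone:
  assumes "\<bar>det2 v w\<bar> = 1" "\<bar>det2 v w'\<bar> = 1"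
    and "snd (Umat v w a) \<ge> 0" "snd (Umat v w' a) \<ge> 0"
  shows "Umat v w' a =
    (fst (Umat v w a) + det2 v w' * det2 w w' * snd (Umat v w a), snd (Umat v w a))"
proof -
  have "\<bar>det2 v w * det2 v w'\<bar> = 1" using assms(1,2) by (simp add: abs_mult)
  with assms Umat_change_of_complement[OF assms(1,2), of a]
  have "snd (Umat v w' a) = snd (Umat v w a)"
    by (auto simp: abs_if split: if_splits)
  then show ?thesis using Umat_change_of_complement[OF assms(1,2), of a] by (simp add: prod_eq_iff)
qed

definition shear :: "int \<Rightarrow> 'a::field \<times> 'a \<Rightarrow> 'a \<times> 'a" where
  "shear c z = (fst z, fst z powi c * snd z)"

lemma fst_shear [simp]: "fst (shear c z) = fst z"
  by (simp add: shear_def)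

lemma shear_axis [simp]: "shear c (\<rho>, 0) = (\<rho>, 0)"
  by (simp add: shear_def)

lemma shear_shear_uminus: "fst z \<noteq> 0 \<Longrightarrow> shear c (shear (- c) z) = z"
  by (cases z) (simp add: shear_def power_int_minus)

lemma tendsto_shear_axis:
  fixes r :: "nat \<Rightarrow> 'a::real_normed_field \<times> 'a"
  assumes "r \<longlonglongrightarrow> (\<rho>, 0)" "\<rho> \<noteq> 0"
  shows "(\<lambda>k. shear c (r k)) \<longlonglongrightarrow> (\<rho>, 0)"
proof -
  have "(\<lambda>k. fst (r k)) \<longlonglongrightarrow> \<rho>" "(\<lambda>k. snd (r k)) \<longlonglongrightarrow> 0"
    using tendsto_fst[OF assms(1)] tendsto_snd[OF assms(1)] by simp_all
  then have "(\<lambda>k. (fst (r k), fst (r k) powi c * snd (r k))) \<longlonglongrightarrow> (\<rho>, \<rho> powi c * 0)"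
    by (intro tendsto_Pair tendsto_mult tendsto_power_int assms(2))
  then show ?thesis by (simp add: shear_def)
qed

lemma leval_ptrans:
  fixes Q :: "'a::field lpoly"
  assumes "finite (supp Q)"
  shows "leval (ptrans U Q) z = (\<Sum>a\<in>supp Q. Q a * (fst z powi fst (U a) * snd z powi snd (U a)))"
proof -
  let ?m = "\<lambda>b. fst z powi fst b * snd z powi snd b"
  have supp_ptrans: "supp (ptrans U Q) \<subseteq> U ` supp Q"
  proof
    fix b assume "b \<in> supp (ptrans U Q)"
    then have "ptrans U Q b \<noteq> 0" by (simp add: supp_def)
    then have "{a \<in> supp Q. U a = b} \<noteq> {}" unfolding ptrans_def by force
    then show "b \<in> U ` supp Q" by blast
  qed
  have "leval (ptrans U Q) z = (\<Sum>b\<in>U ` supp Q. ptrans U Q b * ?m b)"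
    unfolding leval_def mult.assoc
    by (rule sum.mono_neutral_left) (use assms supp_ptrans in \<open>auto simp: supp_def\<close>)
  also have "\<dots> = (\<Sum>b\<in>U ` supp Q. \<Sum>a\<in>{a\<in>supp Q. U a = b}. Q a * ?m (U a))"
    unfolding ptrans_def sum_distrib_right by (intro sum.cong) auto
  also have "\<dots> = (\<Sum>a\<in>supp Q. Q a * ?m (U a))"
    by (rule sum.image_gen[symmetric]) (rule assms)
  finally show ?thesis .
qed

lemma leval_ptrans_shear:
  fixes Q :: "'a::field lpoly"
  assumes "finite (supp Q)" "\<And>a. a \<in> supp Q \<Longrightarrow> U' a = (fst (U a) + c * snd (U a), snd (U a))"
    and "fst z \<noteq> 0"
  shows "leval (ptrans U' Q) z = leval (ptrans U Q) (shear c z)"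
  unfolding leval_ptrans[OF assms(1)] shear_def
proof (intro sum.cong refl)
  fix a assume "a \<in> supp Q"
  have "fst z powi (fst (U a) + c * snd (U a)) = fst z powi fst (U a) * (fst z powi c) powi snd (U a)"
    using assms(3) by (simp add: power_int_add power_int_mult)
  then show "Q a * (fst z powi fst (U' a) * snd z powi snd (U' a)) =
      Q a * (fst (fst z, fst z powi c * snd z) powi fst (U a) *
             snd (fst z, fst z powi c * snd z) powi snd (U a))"
    using assms(2)[OF \<open>a \<in> supp Q\<close>] by (simp add: power_int_mult_distrib)
qed

lemma TF_subset_shear:
  fixes f1 f2 :: "'a::real_normed_field lpoly"
  assumes zeros: "\<And>y z. fst z \<noteq> 0 \<Longrightarrow> common_zero (Ubar U' \<gamma>1 \<gamma>2 f1 f2 y) z \<Longrightarrow>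
      common_zero (Ubar U \<gamma>1 \<gamma>2 f1 f2 y) (shear c z)"
  shows "TF U' \<gamma>1 \<gamma>2 f1 f2 \<subseteq> TF U \<gamma>1 \<gamma>2 f1 f2"
proof -
  have axis: "common_zero (Ubar U \<gamma>1 \<gamma>2 f1 f2 y) (\<rho>, 0)"
    if "\<rho> \<noteq> 0" "common_zero (Ubar U' \<gamma>1 \<gamma>2 f1 f2 y) (\<rho>, 0)" for \<rho> y
    using zeros[of "(\<rho>, 0)"] that by simp
  have "Sol U' \<gamma>1 \<gamma>2 f1 f2 \<subseteq> Sol U \<gamma>1 \<gamma>2 f1 f2"
    unfolding Sol_def using axis by (simp add: subset_iff) metis
  moreover have "TFrho U' \<gamma>1 \<gamma>2 f1 f2 \<rho> \<subseteq> TFrho U \<gamma>1 \<gamma>2 f1 f2 \<rho>"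
    if "\<rho> \<in> Sol U' \<gamma>1 \<gamma>2 f1 f2" for \<rho>
    unfolding TFrho_def
  proof (intro closure_mono subsetI CollectI, elim CollectE conjE exE)
    fix y r ys
    assume y: "common_zero (Ubar U' \<gamma>1 \<gamma>2 f1 f2 y) (\<rho>, 0)"
      and torus: "\<forall>k. fst (r k) \<noteq> 0 \<and> snd (r k) \<noteq> 0" and "r \<longlonglongrightarrow> (\<rho>, 0)" "ys \<longlonglongrightarrow> y"
      and zs: "\<forall>k. common_zero (Ubar U' \<gamma>1 \<gamma>2 f1 f2 (ys k)) (r k)"
    have "\<rho> \<noteq> 0" using that by (simp add: Sol_def)
    have "\<forall>k. fst (shear c (r k)) \<noteq> 0 \<and> snd (shear c (r k)) \<noteq> 0"
      using torus by (simp add: shear_def)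
    moreover have "(\<lambda>k. shear c (r k)) \<longlonglongrightarrow> (\<rho>, 0)"
      using tendsto_shear_axis[OF \<open>r \<longlonglongrightarrow> (\<rho>, 0)\<close> \<open>\<rho> \<noteq> 0\<close>] .
    moreover have "\<forall>k. common_zero (Ubar U \<gamma>1 \<gamma>2 f1 f2 (ys k)) (shear c (r k))"
      using zeros zs torus by simp
    ultimately show "common_zero (Ubar U \<gamma>1 \<gamma>2 f1 f2 y) (\<rho>, 0) \<and>
        (\<exists>r ys. (\<forall>k. fst (r k) \<noteq> 0 \<and> snd (r k) \<noteq> 0) \<and> r \<longlonglongrightarrow> (\<rho>, 0) \<and> ys \<longlonglongrightarrow> y \<and>
          (\<forall>k. common_zero (Ubar U \<gamma>1 \<gamma>2 f1 f2 (ys k)) (r k)))"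
      using axis[OF \<open>\<rho> \<noteq> 0\<close> y] \<open>ys \<longlonglongrightarrow> y\<close>
      by (intro conjI exI[of _ "\<lambda>k. shear c (r k)"] exI[of _ ys]) simp_all
  qed
  ultimately show ?thesis
    unfolding TF_def by (rule UN_mono)
qed

lemma TF_eq_shear:
  fixes f1 f2 :: "'a::real_normed_field lpoly"
  assumes "\<And>y z. fst z \<noteq> 0 \<Longrightarrow>
      common_zero (Ubar U' \<gamma>1 \<gamma>2 f1 f2 y) z \<longleftrightarrow> common_zero (Ubar U \<gamma>1 \<gamma>2 f1 f2 y) (shear c z)"
  shows "TF U' \<gamma>1 \<gamma>2 f1 f2 = TF U \<gamma>1 \<gamma>2 f1 f2"
proof
  show "TF U' \<gamma>1 \<gamma>2 f1 f2 \<subseteq> TF U \<gamma>1 \<gamma>2 f1 f2"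
    by (rule TF_subset_shear) (simp add: assms)
  show "TF U \<gamma>1 \<gamma>2 f1 f2 \<subseteq> TF U' \<gamma>1 \<gamma>2 f1 f2"
  proof (rule TF_subset_shear[where c = "- c"])
    fix y z assume "fst z \<noteq> 0" "common_zero (Ubar U \<gamma>1 \<gamma>2 f1 f2 y) z"
    then show "common_zero (Ubar U' \<gamma>1 \<gamma>2 f1 f2 y) (shear (- c) z)"
      using assms[of "shear (- c) z" y] shear_shear_uminus[OF \<open>fst z \<noteq> 0\<close>] by simp
  qed
qed

lemma extreme_point_collinear_same_ray:
  fixes x p q :: "'a::real_vector"
  assumes "x extreme_point_of G" "collinear G" "x + p \<in> G" "x + q \<in> G" "p \<noteq> 0" "q \<noteq> 0"
  obtains \<mu> where "\<mu> > 0" "q = \<mu> *\<^sub>R p"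
proof -
  have "x \<in> G" using assms(1) by (simp add: extreme_point_of_def)
  then have "{x + p, x, x + q} \<subseteq> G" using assms(3,4) by blast
  then have "collinear {x + p, x, x + q}" by (rule collinear_subset[OF assms(2)])
  then have "collinear {0, p, q}"
    by (simp add: collinear_3)
  then obtain \<mu> where q: "q = \<mu> *\<^sub>R p"
    using assms(5,6) by (auto simp: collinear_lemma)
  have "\<not> \<mu> < 0"
  proof
    assume "\<mu> < 0"
    define s where "s = 1 / (1 - \<mu>)"
    have "0 < s" "s < 1" using \<open>\<mu> < 0\<close> by (auto simp: s_def field_simps)
    moreover have "x = (1 - s) *\<^sub>R (x + p) + s *\<^sub>R (x + q)"
    proof -
      have "(1 - s) + s * \<mu> = 0" using \<open>\<mu> < 0\<close> by (simp add: s_def field_simps)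
      moreover have "(1 - s) *\<^sub>R (x + p) + s *\<^sub>R (x + q) = x + ((1 - s) + s * \<mu>) *\<^sub>R p"
        by (simp add: q algebra_simps)
      ultimately show ?thesis by simp
    qed
    moreover have "x + p \<noteq> x + q"
    proof
      assume "x + p = x + q"
      then have "(1 - \<mu>) *\<^sub>R p = 0" by (simp add: q algebra_simps)
      with \<open>\<mu> < 0\<close> assms(5) show False by simp
    qed
    ultimately have "x \<in> open_segment (x + p) (x + q)"
      unfolding in_segment by blast
    then show False using assms(1,3,4) by (auto simp: extreme_point_of_def)
  qed
  moreover have "\<mu> \<noteq> 0" using q assms(6) by auto
  ultimately have "\<mu> > 0" by linarith
  then show thesis using q by (rule that)
qed

lemma coprime_dvd_of_cross_eq:
  fixes a b c d :: int
  assumes "coprime a b" "a * d = b * c"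
  shows "a dvd c"
proof -
  have "a dvd b * c" unfolding assms(2)[symmetric] by simp
  with assms(1) show ?thesis by (simp add: coprime_dvd_mult_right_iff)
qed

lemma primitive_positive_multiple_eq:
  assumes "gcd (fst v) (snd v) = 1" "gcd (fst v') (snd v') = 1"
    and "\<mu> > 0" "rvec v' = \<mu> *\<^sub>R rvec v"
  shows "v' = v"
proof -
  obtain v1 v2 x1 x2 where components: "v = (v1, v2)" "v' = (x1, x2)" by (cases v, cases v') auto
  have x1: "of_int x1 = \<mu> * of_int v1" and x2: "of_int x2 = \<mu> * of_int v2"
    using assms(4) by (simp_all add: components rvec_def)
  then have "of_int (v1 * x2) = (of_int (v2 * x1) :: real)" by simp
  then have cross: "v1 * x2 = v2 * x1" by (simp only: of_int_eq_iff)
  have cop: "coprime v1 v2" "coprime x1 x2"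
    using assms(1,2) by (simp_all add: components coprime_iff_gcd_eq_1)
  have "v1 dvd x1" using coprime_dvd_of_cross_eq[OF cop(1) cross] .
  moreover have "x1 dvd v1"
    using coprime_dvd_of_cross_eq[OF cop(2), of v2 v1] cross by (simp add: mult.commute)
  ultimately have "\<bar>x1\<bar> = \<bar>v1\<bar>" by (rule zdvd_antisym_abs[symmetric])
  have "v2 dvd x2"
    using coprime_dvd_of_cross_eq[of v2 v1 x1 x2] cop(1) cross by (simp add: coprime_commute)
  moreover have "x2 dvd v2"
    using coprime_dvd_of_cross_eq[of x2 x1 v1 v2] cop(2) cross
    by (simp add: coprime_commute mult.commute)
  ultimately have "\<bar>x2\<bar> = \<bar>v2\<bar>" by (rule zdvd_antisym_abs[symmetric])
  have unit: "\<mu> = 1" if "\<bar>x\<bar> = \<bar>v\<bar>" "of_int x = \<mu> * of_int v" "v \<noteq> 0" for x v :: int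
  proof -
    have "\<mu> * \<bar>of_int v\<bar> = \<bar>of_int v\<bar>"
      using that(1,2) \<open>\<mu> > 0\<close> by (metis abs_mult abs_of_pos of_int_abs)
    with that(3) show ?thesis by simp
  qed
  have "v1 \<noteq> 0 \<or> v2 \<noteq> 0" using cop(1) by auto
  then have "\<mu> = 1"
    using unit x1 x2 \<open>\<bar>x1\<bar> = \<bar>v1\<bar>\<close> \<open>\<bar>x2\<bar> = \<bar>v2\<bar>\<close> by blast
  then show ?thesis using x1 x2 components by simp
qed

lemma toric_basis_same_direction:
  assumes "rvec a1 extreme_point_of \<Gamma>" "aff_dim \<Gamma> = 1"
    and "toric_basis A \<Gamma> a1 v w" "toric_basis A \<Gamma> a1 v' w'"
  shows "v' = v"
proof -
  obtain t t' where "t > 0" "t' > 0"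
    and in_edge: "rvec a1 + t *\<^sub>R rvec v \<in> \<Gamma>" "rvec a1 + t' *\<^sub>R rvec v' \<in> \<Gamma>"
    and g: "gcd (fst v) (snd v) = 1" "gcd (fst v') (snd v') = 1"
    using assms(3,4) by (auto simp: toric_basis_def)
  have "rvec v \<noteq> 0" "rvec v' \<noteq> 0"
    using g by (auto simp: rvec_def zero_prod_def)
  then have "t *\<^sub>R rvec v \<noteq> 0" "t' *\<^sub>R rvec v' \<noteq> 0"
    using \<open>t > 0\<close> \<open>t' > 0\<close> by simp_all
  moreover have "collinear \<Gamma>" using assms(2) by (simp add: collinear_aff_dim)
  ultimately obtain \<mu> where "\<mu> > 0" and ray: "t' *\<^sub>R rvec v' = \<mu> *\<^sub>R (t *\<^sub>R rvec v)"
    using extreme_point_collinear_same_ray[OF assms(1) _ in_edge] by blast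
  have eq: "rvec v' = (\<mu> * t / t') *\<^sub>R rvec v"
  proof -
    have "rvec v' = inverse t' *\<^sub>R (t' *\<^sub>R rvec v')" using \<open>t' > 0\<close> by simp
    also have "\<dots> = (\<mu> * t / t') *\<^sub>R rvec v" by (simp add: ray field_simps)
    finally show ?thesis .
  qed
  have "\<mu> * t / t' > 0" using \<open>\<mu> > 0\<close> \<open>t > 0\<close> \<open>t' > 0\<close> by simp
  from primitive_positive_multiple_eq[OF g this eq] show ?thesis .
qed

lemma supp_minus_const_subset: "f (0, 0) \<noteq> 0 \<Longrightarrow> supp (minus_const f c) \<subseteq> supp f"
  by (auto simp: supp_def minus_const_def split: if_splits)

lemma supp_xshift: "supp (xshift g P) = (\<lambda>a. a - g) ` supp P"
  by (force simp: supp_def xshift_def image_iff intro: exI[of _ "_ + g"])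

lemma msum_commute: "msum A B = msum B A"
  unfolding msum_def using add.commute by blast

lemma supp_xshift_in_msum:
  assumes "f (0, 0) \<noteq> 0" "rvec \<gamma>' \<in> B" "\<gamma> + \<gamma>' = a1"
    and "a \<in> supp (xshift \<gamma> (minus_const f c))"
  shows "rvec a1 + rvec a \<in> msum (NP f) B"
proof -
  obtain b where "b \<in> supp (minus_const f c)" "a = b - \<gamma>"
    using assms(4) by (auto simp: supp_xshift)
  moreover note supp_minus_const_subset[of f c, OF assms(1)]
  ultimately have "b \<in> supp f" "a = b - \<gamma>" by blast+
  then have "rvec a1 + rvec a = rvec b + rvec \<gamma>'" "rvec b \<in> NP f"
    using assms(3) by (auto simp: rvec_def NP_def hull_inc)
  with assms(2) show ?thesis unfolding msum_def by blast
qed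

lemma finite_supp_xshift_minus_const:
  "finite (supp f) \<Longrightarrow> f (0, 0) \<noteq> 0 \<Longrightarrow> finite (supp (xshift g (minus_const f c)))"
  by (metis finite_imageI finite_subset supp_minus_const_subset supp_xshift)

lemma leval_ptrans_change_of_complement:
  fixes Q :: "'a::field lpoly"
  assumes "toric_basis A \<Gamma> a1 v w" "toric_basis A \<Gamma> a1 v w'"
    and "finite (supp Q)" "\<And>a. a \<in> supp Q \<Longrightarrow> rvec a1 + rvec a \<in> A" "fst z \<noteq> 0"
  shows "leval (ptrans (Umat v w') Q) z =
    leval (ptrans (Umat v w) Q) (shear (det2 v w' * det2 w w') z)"
proof (rule leval_ptrans_shear[OF assms(3) _ assms(5)])
  have "\<bar>det2 v w\<bar> = 1" "\<bar>det2 v w'\<bar> = 1"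
    using assms(1,2) by (auto simp: toric_basis_def)
  then show "Umat v w' a =
      (fst (Umat v w a) + det2 v w' * det2 w w' * snd (Umat v w a), snd (Umat v w a))"
    if "a \<in> supp Q" for a
    using Umat_shear_on_cone Umat_snd_nonneg[OF assms(1) assms(4)[OF that]]
      Umat_snd_nonneg[OF assms(2) assms(4)[OF that]] by blast
qed

lemma TF_independent_of_toric_transformation:
  fixes f1 f2 :: "'a::real_normed_field lpoly"
  assumes "is_poly2 f1" "is_poly2 f2" "f1 (0, 0) \<noteq> 0" "f2 (0, 0) \<noteq> 0"
    and "is_edge (msum (NP f1) (NP f2)) \<Gamma>" "min_norm_vertex \<Gamma> a1"
    and "rvec \<gamma>1 \<in> NP f1" "rvec \<gamma>2 \<in> NP f2" "\<gamma>1 + \<gamma>2 = a1"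
    and "U \<in> T_Gamma (msum (NP f1) (NP f2)) \<Gamma> a1" "U' \<in> T_Gamma (msum (NP f1) (NP f2)) \<Gamma> a1"
  shows "TF U \<gamma>1 \<gamma>2 f1 f2 = TF U' \<gamma>1 \<gamma>2 f1 f2"
proof -
  let ?A = "msum (NP f1) (NP f2)"
  obtain v w v' w' where tb: "toric_basis ?A \<Gamma> a1 v w" "toric_basis ?A \<Gamma> a1 v' w'"
    and U: "U = Umat v w" "U' = Umat v' w'"
    using assms(10,11) unfolding T_Gamma_def by blast
  have "v' = v"
    by (rule toric_basis_same_direction[OF _ _ tb])
       (use assms(5,6) in \<open>simp_all add: min_norm_vertex_def is_edge_def\<close>)
  define Q1 where "Q1 y = xshift \<gamma>1 (minus_const f1 (fst y))" for y :: "'a \<times> 'a"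
  define Q2 where "Q2 y = xshift \<gamma>2 (minus_const f2 (snd y))" for y :: "'a \<times> 'a"
  have "finite (supp f1)" "finite (supp f2)"
    using assms(1,2) by (simp_all add: is_poly2_def)
  then have "finite (supp (Q1 y))" "finite (supp (Q2 y))" for y
    using assms(3,4) by (simp_all add: Q1_def Q2_def finite_supp_xshift_minus_const)
  moreover have "rvec a1 + rvec a \<in> ?A" if "a \<in> supp (Q1 y) \<or> a \<in> supp (Q2 y)" for a y
  proof -
    have "\<gamma>2 + \<gamma>1 = a1" using assms(9) by (simp add: add.commute)
    then show ?thesis
      using that supp_xshift_in_msum[where f = f1, OF assms(3,8,9)]
        supp_xshift_in_msum[where f = f2, OF assms(4,7)]
      unfolding Q1_def Q2_def msum_commute[of "NP f2"] by blast
  qed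
  ultimately have eval:
      "leval (ptrans U' Q) z = leval (ptrans U Q) (shear (det2 v w' * det2 w w') z)"
    if "Q = Q1 y \<or> Q = Q2 y" "fst z \<noteq> 0" for Q y z
    using that leval_ptrans_change_of_complement[OF tb(1) tb(2)[unfolded \<open>v' = v\<close>]]
    unfolding U \<open>v' = v\<close> by blast
  then have "common_zero (Ubar U' \<gamma>1 \<gamma>2 f1 f2 y) z \<longleftrightarrow>
      common_zero (Ubar U \<gamma>1 \<gamma>2 f1 f2 y) (shear (det2 v w' * det2 w w') z)" if "fst z \<noteq> 0" for y z
    using eval[of "Q1 y" y z] eval[of "Q2 y" y z] that
    by (simp add: common_zero_def Ubar_def flip: Q1_def Q2_def)
  then show ?thesis by (rule TF_eq_shear[symmetric])
qed

lemma mem_of_extreme_point_of_face: "x extreme_point_of face P \<alpha> \<Longrightarrow> x \<in> P"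
  by (simp add: extreme_point_of_def face_def)

theorem lemma4p2:
  shows
  "(\<forall>(f1 :: real lpoly) f2 \<alpha> \<Gamma> a1 \<gamma>1 \<gamma>2 U U'.
      is_poly2 f1 \<and> is_poly2 f2 \<and> dominant2 f1 f2 \<and> f1 (0, 0) \<noteq> 0 \<and> f2 (0, 0) \<noteq> 0 \<and>
      is_edge (msum (NP f1) (NP f2)) \<Gamma> \<and>
      \<alpha> \<noteq> 0 \<and> \<Gamma> = face (msum (NP f1) (NP f2)) \<alpha> \<and>
      min_norm_vertex \<Gamma> a1 \<and>
      rvec \<gamma>1 extreme_point_of face (NP f1) \<alpha> \<and> rvec \<gamma>2 extreme_point_of face (NP f2) \<alpha> \<and>
      \<gamma>1 + \<gamma>2 = a1 \<and>
      U \<in> T_Gamma (msum (NP f1) (NP f2)) \<Gamma> a1 \<and> U' \<in> T_Gamma (msum (NP f1) (NP f2)) \<Gamma> a1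
      \<longrightarrow> TF U \<gamma>1 \<gamma>2 f1 f2 = TF U' \<gamma>1 \<gamma>2 f1 f2)
  \<and>
   (\<forall>(f1 :: complex lpoly) f2 \<alpha> \<Gamma> a1 \<gamma>1 \<gamma>2 U U'.
      is_poly2 f1 \<and> is_poly2 f2 \<and> dominant2 f1 f2 \<and> f1 (0, 0) \<noteq> 0 \<and> f2 (0, 0) \<noteq> 0 \<and>
      is_edge (msum (NP f1) (NP f2)) \<Gamma> \<and>
      \<alpha> \<noteq> 0 \<and> \<Gamma> = face (msum (NP f1) (NP f2)) \<alpha> \<and>
      min_norm_vertex \<Gamma> a1 \<and>
      rvec \<gamma>1 extreme_point_of face (NP f1) \<alpha> \<and> rvec \<gamma>2 extreme_point_of face (NP f2) \<alpha> \<and>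
      \<gamma>1 + \<gamma>2 = a1 \<and>
      U \<in> T_Gamma (msum (NP f1) (NP f2)) \<Gamma> a1 \<and> U' \<in> T_Gamma (msum (NP f1) (NP f2)) \<Gamma> a1
      \<longrightarrow> TF U \<gamma>1 \<gamma>2 f1 f2 = TF U' \<gamma>1 \<gamma>2 f1 f2)"
  by (intro conjI allI impI; elim conjE)
     (rule TF_independent_of_toric_transformation; blast dest: mem_of_extreme_point_of_face)+

end
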